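(* Let $n$, $m$ and $d$ be integers with $n\geq 5$, $m\geq 5$ and $d\geq 3$. Let $G\in T_{n,m}$, and let $v$ be a vertex of $G$ of degree $1$ whose unique neighbor is the terminal $s$. If $G-sv$ is not complete, then there exists $H\in T_{n,m}$ that is $d$-stronger than $G$.
   Context: All graphs are finite, simple and undirected. A two-terminal graph is a graph $G$ together with two distinguished vertices $s,t$ (the terminals). $T_{n,m}$ denotes the set of all pairwise nonisomorphic (with isomorphisms preserving the set of terminals) two-terminal graphs with $n$ vertices and $m$ edges. A two-terminal graph is called complete if the connected component containing both terminals is a complete graph. $G-sv$ is the two-terminal graph obtained from $G$ by deleting the edge $sv$. For a positive integer $d$, a $d$-pathset of a two-terminal graph $G$ is a spanning subgraph of $G$ containing a path of length (number of edges) at most $d$ joining $s$ and $t$; $N_i^d(G)$ is the number of $d$-pathsets of $G$ with exactly $i$ edges. For $G,H\in T_{n,m}$, $H$ is $d$-stronger than $G$ if $N_i^d(H)\geq N_i^d(G)$ for every $i\in\{1,\ldots,m\}$ and $N_j^d(H)>N_j^d(G)$ for some $j\in\{1,\ldots,m\}$. *)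

theory Defs
  imports Main
begin

definition tt_graph :: "'a set \<Rightarrow> 'a set set \<Rightarrow> 'a \<Rightarrow> 'a \<Rightarrow> bool" where
  "tt_graph V E s t \<longleftrightarrow> finite V \<and> s \<in> V \<and> t \<in> V \<and> s \<noteq> t \<and>
     (\<forall>e\<in>E. \<exists>u w. e = {u, w} \<and> u \<noteq> w \<and> u \<in> V \<and> w \<in> V)"

definition degree :: "'a set set \<Rightarrow> 'a \<Rightarrow> nat" where
  "degree E v = card {u. {u, v} \<in> E}"

definition is_path :: "'a set set \<Rightarrow> 'a list \<Rightarrow> 'a \<Rightarrow> 'a \<Rightarrow> bool" where
  "is_path F xs u w \<longleftrightarrow> xs \<noteq> [] \<and> hd xs = u \<and> last xs = w \<and> distinct xs \<and>
     (\<forall>i. Suc i < length xs \<longrightarrow> {xs ! i, xs ! Suc i} \<in> F)"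

definition d_pathset :: "nat \<Rightarrow> 'a set set \<Rightarrow> 'a \<Rightarrow> 'a \<Rightarrow> 'a set set \<Rightarrow> bool" where
  "d_pathset d E s t F \<longleftrightarrow> F \<subseteq> E \<and> (\<exists>xs. is_path F xs s t \<and> length xs - 1 \<le> d)"

definition N :: "nat \<Rightarrow> nat \<Rightarrow> 'a set set \<Rightarrow> 'a \<Rightarrow> 'a \<Rightarrow> nat" where
  "N d i E s t = card {F. d_pathset d E s t F \<and> card F = i}"

definition d_stronger ::
  "nat \<Rightarrow> nat \<Rightarrow> 'a set set \<Rightarrow> 'a \<Rightarrow> 'a \<Rightarrow> 'b set set \<Rightarrow> 'b \<Rightarrow> 'b \<Rightarrow> bool" where
  "d_stronger d m EH sH tH EG sG tG \<longleftrightarrow>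
     (\<forall>i\<in>{1..m}. N d i EH sH tH \<ge> N d i EG sG tG) \<and>
     (\<exists>j\<in>{1..m}. N d j EH sH tH > N d j EG sG tG)"

definition adj :: "'a set set \<Rightarrow> 'a \<Rightarrow> 'a \<Rightarrow> bool" where
  "adj E u w \<longleftrightarrow> {u, w} \<in> E"

definition tt_complete :: "'a set set \<Rightarrow> 'a \<Rightarrow> 'a \<Rightarrow> bool" where
  "tt_complete E s t \<longleftrightarrow> (adj E)\<^sup>*\<^sup>* s t \<and>
     (\<forall>u w. (adj E)\<^sup>*\<^sup>* s u \<and> (adj E)\<^sup>*\<^sup>* s w \<and> u \<noteq> w \<longrightarrow> {u, w} \<in> E)"

end

theory Submission
  imports Defs
begin

text \<open>If \<open>v = t\<close>, every \<open>d\<close>-pathset of \<open>G\<close> contains the bridge \<open>s t\<close>. Keep that edge, place a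
  triangle \<open>s a t\<close> and match the remaining edges bijectively: pathsets keep their size, and
  \<open>{s a, a t}\<close> is a new one.

  If \<open>v \<noteq> t\<close>, the pendant edge \<open>s v\<close> lies on no \<open>s\<close>-\<open>t\<close> path, so replacing it by a non-edge \<open>f\<close>
  of \<open>G - s v\<close> maps the \<open>d\<close>-pathsets of \<open>G\<close> injectively and size-preservingly into those of
  \<open>G - s v + f\<close>. Because \<open>G - s v\<close> is not complete, some \<open>f\<close> closes an \<open>s\<close>-\<open>t\<close> path of length
  at most 3 that needs \<open>f\<close>; its edge set is a \<open>d\<close>-pathset outside the image.\<close>

lemma is_path_Nil [simp]: "\<not> is_path F [] u w"
  by (simp add: is_path_def)

lemma is_path_singleton [simp]: "is_path F [x] u w \<longleftrightarrow> x = u \<and> x = w"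
  by (simp add: is_path_def)

lemma is_path_Cons_Cons [simp]:
  "is_path F (x # y # ys) u w \<longleftrightarrow>
     x = u \<and> x \<notin> set (y # ys) \<and> {x, y} \<in> F \<and> is_path F (y # ys) y w"
proof -
  have "(\<forall>i. Suc i < length (x # y # ys) \<longrightarrow> {(x # y # ys) ! i, (x # y # ys) ! Suc i} \<in> F) \<longleftrightarrow>
        {x, y} \<in> F \<and> (\<forall>i. Suc i < length (y # ys) \<longrightarrow> {(y # ys) ! i, (y # ys) ! Suc i} \<in> F)"
    by (auto simp: less_Suc_eq_0_disj)
  then show ?thesis
    unfolding is_path_def by auto
qed

lemma is_path_mono: "is_path F xs u w \<Longrightarrow> F \<subseteq> F' \<Longrightarrow> is_path F' xs u w"
  unfolding is_path_def by blast

lemma is_path_closed_set: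
  assumes "is_path F xs u w" "u \<in> S" "\<And>x y. {x, y} \<in> F \<Longrightarrow> x \<in> S \<Longrightarrow> y \<in> S"
  shows "w \<in> S"
  using assms(1,2)
proof (induction xs arbitrary: u rule: induct_list012)
  case (3 x y ys)
  then have "y \<in> S" "is_path F (y # ys) y w"
    using assms(3)[of x y] by auto
  then show ?case
    using "3.IH"(2)[of y] by blast
qed simp_all

lemma is_path_last_edge:
  assumes "is_path F xs u w" "u \<noteq> w"
  shows "\<exists>a. {a, w} \<in> F"
  using assms
proof (induction xs arbitrary: u rule: induct_list012)
  case (3 x y ys)
  then have "{u, y} \<in> F" "is_path F (y # ys) y w"
    by auto
  then show ?case
    using "3.IH"(2)[of y] by (cases "y = w") auto
qed simp_all

lemma is_path_inner_vertex:
  assumes "is_path F xs u w" "v \<in> set xs" "v \<noteq> u" "v \<noteq> w"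
  shows "\<exists>a b. a \<noteq> b \<and> {a, v} \<in> F \<and> {b, v} \<in> F"
  using assms
proof (induction xs arbitrary: u rule: induct_list012)
  case (3 x y ys)
  show ?case
  proof (cases "v = y")
    case True
    then obtain z zs where "ys = z # zs"
      using 3 by (cases ys) auto
    then have "x \<noteq> z" "{x, v} \<in> F" "{z, v} \<in> F"
      using 3 True by (auto simp: insert_commute)
    then show ?thesis
      by blast
  next
    case False
    then show ?thesis
      using "3.IH"(2)[of y] "3.prems" by simp
  qed
qed simp_all

lemma is_path_avoids_pendant:
  assumes "is_path F xs s t" "v \<noteq> s" "v \<noteq> t" "\<And>u. {u, v} \<in> F \<Longrightarrow> u = s"
  shows "v \<notin> set xs"
  using is_path_inner_vertex[OF assms(1) _ assms(2,3)] assms(4) by blast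

lemma is_path_Diff_edge:
  assumes "is_path F xs u w" "v \<notin> set xs" "v \<in> e"
  shows "is_path (F - {e}) xs u w"
  using assms(1,2)
proof (induction xs arbitrary: u rule: induct_list012)
  case (3 x y ys)
  then have "{x, y} \<noteq> e"
    using assms(3) by auto
  then show ?case
    using 3 by auto
qed simp_all

definition vertex_pairs :: "'a set \<Rightarrow> 'a set set" where
  "vertex_pairs V = {{x, y} | x y. x \<in> V \<and> y \<in> V \<and> x \<noteq> y}"

lemma tt_graph_iff_vertex_pairs:
  "tt_graph V E s t \<longleftrightarrow> finite V \<and> s \<in> V \<and> t \<in> V \<and> s \<noteq> t \<and> E \<subseteq> vertex_pairs V"
  unfolding tt_graph_def vertex_pairs_def by blast

lemma finite_vertex_pairs: "finite V \<Longrightarrow> finite (vertex_pairs V)"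
  unfolding vertex_pairs_def by (rule finite_subset[of _ "Pow V"]) auto

lemma tt_graph_finite_edges: "tt_graph V E s t \<Longrightarrow> finite E"
  unfolding tt_graph_iff_vertex_pairs using finite_vertex_pairs finite_subset by blast

lemma degree_one_neighbour_unique:
  assumes "degree E v = 1" "{s, v} \<in> E" "{u, v} \<in> E"
  shows "u = s"
proof -
  obtain z where "{u. {u, v} \<in> E} = {z}"
    using assms(1) card_1_singletonE unfolding degree_def by blast
  then show ?thesis
    using assms(2,3) by (metis mem_Collect_eq singletonD)
qed

lemma card_insert_Diff_singleton:
  assumes "finite F" "e \<in> F" "f \<notin> F"
  shows "card (insert f (F - {e})) = card F"
proof -
  have "card F > 0"
    using assms card_gt_0_iff by blast
  then show ?thesis
    using assms by (simp add: card_Diff_singleton)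
qed

lemma exists_bij_betw_fixing:
  assumes "finite A" "finite B" "card A = card B" "e \<in> A" "e \<in> B"
  shows "\<exists>\<psi>. bij_betw \<psi> A B \<and> \<psi> e = e"
proof -
  have "card (A - {e}) = card (B - {e})"
    using assms by simp
  then obtain \<psi> where "bij_betw \<psi> (A - {e}) (B - {e})"
    using assms(1,2) finite_same_card_bij by blast
  then have "bij_betw (\<psi>(e := e)) (A - {e}) (B - {e})"
    by (rule bij_betw_cong[THEN iffD1, rotated]) simp
  then have "bij_betw (\<psi>(e := e)) (A - {e} \<union> {e}) (B - {e} \<union> {e})"
    using notIn_Un_bij_betw3[of e "A - {e}" "\<psi>(e := e)" "B - {e}"] by simp
  then show ?thesis
    using assms(4,5) by (metis Un_insert_right fun_upd_same insert_Diff sup_bot.right_neutral)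
qed

lemma d_pathset_mono:
  "d_pathset d E s t F \<Longrightarrow> F \<subseteq> F' \<Longrightarrow> F' \<subseteq> E' \<Longrightarrow> d_pathset d E' s t F'"
  unfolding d_pathset_def by (meson is_path_mono order_trans)

lemma d_pathset_nonempty:
  assumes "d_pathset d E s t W" "s \<noteq> t"
  shows "W \<noteq> {}"
  using assms is_path_last_edge by (fastforce simp: d_pathset_def)

lemma d_pathset_Diff_pendant_edge:
  assumes "d_pathset d E s t F" "v \<noteq> s" "v \<noteq> t" "\<And>u. {u, v} \<in> E \<Longrightarrow> u = s"
  shows "d_pathset d (E - {{s, v}}) s t (F - {{s, v}})"
proof -
  obtain xs where FE: "F \<subseteq> E" and xs: "is_path F xs s t" "length xs - 1 \<le> d"
    using assms(1) by (auto simp: d_pathset_def)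
  have "v \<notin> set xs"
    using is_path_avoids_pendant[OF xs(1) assms(2,3)] assms(4) FE by blast
  then have "is_path (F - {{s, v}}) xs s t"
    using is_path_Diff_edge[OF xs(1)] by simp
  then show ?thesis
    using FE xs(2) by (auto simp: d_pathset_def)
qed

lemma d_stronger_by_injection:
  assumes "finite EH"
    and inj: "inj_on \<phi> {F. d_pathset d EG sG tG F}"
    and pathset: "\<And>F. d_pathset d EG sG tG F \<Longrightarrow> d_pathset d EH sH tH (\<phi> F)"
    and card: "\<And>F. d_pathset d EG sG tG F \<Longrightarrow> card (\<phi> F) = card F"
    and W: "d_pathset d EH sH tH W" "W \<notin> \<phi> ` {F. d_pathset d EG sG tG F}" "card W \<in> {1..m}"
  shows "d_stronger d m EH sH tH EG sG tG"
proof -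
  define PG where "PG i = {F. d_pathset d EG sG tG F \<and> card F = i}" for i
  define PH where "PH i = {F. d_pathset d EH sH tH F \<and> card F = i}" for i
  have "finite (PH i)" for i
    by (rule finite_subset[of _ "Pow EH"]) (auto simp: PH_def d_pathset_def \<open>finite EH\<close>)
  moreover have inj_PG: "inj_on \<phi> (PG i)" for i
    using inj by (rule inj_on_subset) (auto simp: PG_def)
  moreover have image_PG: "\<phi> ` PG i \<subseteq> PH i" for i
    using pathset card by (auto simp: PG_def PH_def)
  ultimately have le: "card (PG i) \<le> card (PH i)" for i
    by (metis card_inj_on_le)
  have "W \<in> PH (card W) - \<phi> ` PG (card W)"
    using W(1,2) by (auto simp: PG_def PH_def)
  then have "\<phi> ` PG (card W) \<subset> PH (card W)"
    using image_PG by blast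
  then have "card (PG (card W)) < card (PH (card W))"
    using \<open>finite (PH (card W))\<close> psubset_card_mono card_image[OF inj_PG] by metis
  then show ?thesis
    unfolding d_stronger_def N_def using le W(3) by (auto simp: PG_def PH_def)
qed

section \<open>A bridge at the terminal\<close>

lemma d_stronger_keep_terminal_edge:
  assumes "finite E" "finite H" "card H = card E" "s \<noteq> t" "d \<ge> 1"
    and st: "{s, t} \<in> E" "{s, t} \<in> H"
    and E_needs: "\<And>F. d_pathset d E s t F \<Longrightarrow> {s, t} \<in> F"
    and W: "d_pathset d H s t W" "{s, t} \<notin> W"
  shows "d_stronger d (card E) H s t E s t"
proof -
  obtain \<psi> where \<psi>: "bij_betw \<psi> E H" "\<psi> {s, t} = {s, t}"
    using exists_bij_betw_fixing[OF assms(1,2) assms(3)[symmetric] st] by blast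
  have subset: "F \<subseteq> E" if "d_pathset d E s t F" for F
    using that by (simp add: d_pathset_def)
  have inj: "inj_on (image \<psi>) {F. d_pathset d E s t F}"
    using inj_on_image_Pow[OF bij_betw_imp_inj_on[OF \<psi>(1)]]
    by (rule inj_on_subset) (use subset in blast)
  have pathset: "d_pathset d H s t (\<psi> ` F)" if F: "d_pathset d E s t F" for F
  proof -
    have "{s, t} \<in> \<psi> ` F"
      using E_needs[OF F] \<psi>(2) by (metis imageI)
    then have "is_path (\<psi> ` F) [s, t] s t"
      using assms(4) by simp
    moreover have "\<psi> ` F \<subseteq> H"
      using subset[OF F] bij_betw_imp_surj_on[OF \<psi>(1)] by blast
    moreover have "length [s, t] - 1 \<le> d"
      using assms(5) by simp
    ultimately show ?thesis
      unfolding d_pathset_def by blast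
  qed
  have card: "card (\<psi> ` F) = card F" if "d_pathset d E s t F" for F
    using card_image inj_on_subset[OF bij_betw_imp_inj_on[OF \<psi>(1)] subset[OF that]]
    by blast
  have W_new: "W \<notin> image \<psi> ` {F. d_pathset d E s t F}"
    using W(2) E_needs \<psi>(2) by (metis (no_types, lifting) image_iff mem_Collect_eq)
  have W_card: "card W \<in> {1..card E}"
    using W(1) d_pathset_nonempty[OF W(1) assms(4)] card_mono[OF assms(2)] assms(2,3)
    by (auto simp: d_pathset_def card_gt_0_iff Suc_le_eq intro: finite_subset)
  show ?thesis
    using d_stronger_by_injection[OF assms(2) inj pathset card W(1) W_new W_card] .
qed

lemma exists_edge_set_with_triangle:
  assumes "tt_graph V E s t" "a \<in> V" "a \<noteq> s" "a \<noteq> t" "card E \<ge> 3"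
  shows "\<exists>H. tt_graph V H s t \<and> card H = card E \<and> {{s, t}, {s, a}, {a, t}} \<subseteq> H"
proof -
  define P where "P = vertex_pairs V"
  define X where "X = {{s, t}, {s, a}, {a, t}}"
  have "finite P" "E \<subseteq> P" and st: "s \<in> V" "t \<in> V" "s \<noteq> t"
    using assms(1) finite_vertex_pairs by (auto simp: P_def tt_graph_iff_vertex_pairs)
  moreover have "X \<subseteq> P" "card X = 3"
    using assms(2-4) st by (auto simp: X_def P_def vertex_pairs_def doubleton_eq_iff)
  ultimately have "card E - 3 \<le> card (P - X)"
    using card_mono[of P E] card_Diff_subset[of X P] by (simp add: finite_subset)
  then obtain R where R: "R \<subseteq> P - X" "card R = card E - 3"
    by (meson obtain_subset_with_card_n)
  have "finite R"
    using R(1) \<open>finite P\<close> finite_subset by blast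
  moreover have "finite X" "R \<inter> X = {}"
    using R(1) by (auto simp: X_def)
  ultimately have "card (R \<union> X) = card E"
    using R(2) \<open>card X = 3\<close> assms(5) card_Un_disjoint[of R X] by simp
  moreover have "tt_graph V (R \<union> X) s t"
    using assms(1) R(1) \<open>X \<subseteq> P\<close> by (auto simp: tt_graph_iff_vertex_pairs P_def)
  ultimately show ?thesis
    by (auto simp: X_def)
qed

lemma pendant_terminal_edge_stronger:
  assumes "tt_graph V E s t" "{s, t} \<in> E" "\<And>u. {u, t} \<in> E \<Longrightarrow> u = s"
    and "card V \<ge> 3" "card E \<ge> 3" "d \<ge> 2"
  shows "\<exists>H. tt_graph V H s t \<and> card H = card E \<and> d_stronger d (card E) H s t E s t"
proof -
  have st: "finite V" "s \<in> V" "t \<in> V" "s \<noteq> t"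
    using assms(1) by (auto simp: tt_graph_def)
  have "card (V - {s, t}) > 0"
    using assms(4) st by (simp add: card_Diff_subset)
  then obtain a where a: "a \<in> V" "a \<noteq> s" "a \<noteq> t"
    by (metis Diff_iff card_gt_0_iff ex_in_conv insertCI)
  obtain H where H: "tt_graph V H s t" "card H = card E" "{{s, t}, {s, a}, {a, t}} \<subseteq> H"
    using exists_edge_set_with_triangle[OF assms(1) a assms(5)] by blast
  have E_needs: "{s, t} \<in> F" if F: "d_pathset d E s t F" for F
  proof -
    obtain xs where "F \<subseteq> E" "is_path F xs s t"
      using F unfolding d_pathset_def by blast
    then show ?thesis
      using is_path_last_edge[OF _ st(4)] assms(3) by blast
  qed
  have "d_pathset d H s t {{s, a}, {a, t}}"
    unfolding d_pathset_def
  proof (intro conjI exI)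
    show "is_path {{s, a}, {a, t}} [s, a, t] s t"
      using a st by simp
  qed (use H(3) assms(6) in auto)
  moreover have "{s, t} \<notin> {{s, a}, {a, t}}"
    using a by (auto simp: doubleton_eq_iff)
  moreover have "finite E" "finite H"
    using assms(1) H(1) by (simp_all add: tt_graph_finite_edges)
  ultimately have "d_stronger d (card E) H s t E s t"
    using d_stronger_keep_terminal_edge[of E H s t d] assms(2,6) H E_needs st(4) by simp
  then show ?thesis
    using H by blast
qed

section \<open>Swapping the pendant edge\<close>

definition essential_edge :: "nat \<Rightarrow> 'a set set \<Rightarrow> 'a \<Rightarrow> 'a \<Rightarrow> 'a set \<Rightarrow> 'a set set \<Rightarrow> bool" where
  "essential_edge d G s t f W \<longleftrightarrow>
     d_pathset d (insert f G) s t W \<and> \<not> d_pathset d G s t (W - {f})"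

lemma essential_edge_mem:
  assumes "essential_edge d G s t f W"
  shows "f \<in> W"
proof (rule ccontr)
  assume "f \<notin> W"
  moreover have "W \<subseteq> insert f G"
    using assms by (simp add: essential_edge_def d_pathset_def)
  ultimately have "W - {f} = W" "W \<subseteq> G"
    by auto
  then show False
    using assms d_pathset_mono[of d "insert f G" s t W W G] by (simp add: essential_edge_def)
qed

lemma essential_edge_if_cut:
  assumes "is_path W xs s t" "length xs - 1 \<le> d" "W \<subseteq> insert f G"
    and "s \<in> S" "t \<notin> S" "\<And>x y. {x, y} \<in> W - {f} \<Longrightarrow> x \<in> S \<Longrightarrow> y \<in> S"
  shows "essential_edge d G s t f W"
proof -
  have "\<not> is_path (W - {f}) ys s t" for ys
    using is_path_closed_set[of "W - {f}" ys s t S] assms(4-6) by blast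
  then show ?thesis
    using assms(1-3) unfolding essential_edge_def d_pathset_def by blast
qed

definition swap_edge :: "'a \<Rightarrow> 'a \<Rightarrow> 'a set \<Rightarrow> 'a set" where
  "swap_edge e f F = (if e \<in> F then insert f (F - {e}) else F)"

lemma inj_on_swap_edge:
  assumes "f \<notin> E"
  shows "inj_on (swap_edge e f) (Pow E)"
proof (rule inj_on_inverseI[where g = "swap_edge f e"])
  fix F assume "F \<in> Pow E"
  then show "swap_edge f e (swap_edge e f F) = F"
    using assms by (auto simp: swap_edge_def)
qed

lemma card_swap_edge:
  assumes "finite F" "f \<notin> F"
  shows "card (swap_edge e f F) = card F"
  using assms card_insert_Diff_singleton[of F e f] by (simp add: swap_edge_def)

lemma d_stronger_swap_edge:
  assumes "finite E" "e \<in> E" "f \<notin> E"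
    and removable: "\<And>F. d_pathset d E s t F \<Longrightarrow> d_pathset d (E - {e}) s t (F - {e})"
    and essential: "essential_edge d (E - {e}) s t f W"
  shows "d_stronger d (card E) (insert f (E - {e})) s t E s t"
proof -
  define H where "H = insert f (E - {e})"
  have subset: "F \<subseteq> E" if "d_pathset d E s t F" for F
    using that by (simp add: d_pathset_def)
  have inj: "inj_on (swap_edge e f) {F. d_pathset d E s t F}"
    using inj_on_swap_edge[OF assms(3)] by (rule inj_on_subset) (use subset in blast)
  have pathset: "d_pathset d H s t (swap_edge e f F)" if F: "d_pathset d E s t F" for F
  proof (cases "e \<in> F")
    case True
    then show ?thesis
      using d_pathset_mono[OF removable[OF F], of "insert f (F - {e})" H] subset[OF F]
      by (auto simp: swap_edge_def H_def)
  next
    case False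
    then show ?thesis
      using d_pathset_mono[OF F order_refl, of H] subset[OF F] by (auto simp: swap_edge_def H_def)
  qed
  have card: "card (swap_edge e f F) = card F" if "d_pathset d E s t F" for F
    using subset[OF that] assms(1,3) by (intro card_swap_edge) (auto intro: finite_subset)
  have W_new: "W \<notin> swap_edge e f ` {F. d_pathset d E s t F}"
  proof
    assume "W \<in> swap_edge e f ` {F. d_pathset d E s t F}"
    then obtain F where F: "d_pathset d E s t F" and "W = swap_edge e f F" by blast
    with essential_edge_mem[OF essential] subset[OF F] assms(3) have "W - {f} = F - {e}"
      by (auto simp: swap_edge_def split: if_splits)
    then show False
      using removable[OF F] essential by (simp add: essential_edge_def)
  qed
  have "W \<subseteq> H" "finite H" "W \<noteq> {}"
    using essential essential_edge_mem[OF essential] assms(1)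
    by (auto simp: essential_edge_def d_pathset_def H_def)
  moreover have "card H = card E"
    unfolding H_def by (rule card_insert_Diff_singleton[OF assms(1-3)])
  ultimately have W_card: "card W \<in> {1..card E}"
    using card_mono[of H W] card_gt_0_iff[of W] finite_subset[of W H] by simp
  have "d_pathset d H s t W"
    using essential by (simp add: H_def essential_edge_def)
  from d_stronger_by_injection[OF \<open>finite H\<close> inj pathset card this W_new W_card]
  show ?thesis
    unfolding H_def .
qed

section \<open>Short-path saturated graphs\<close>

text \<open>Each clause rules out a missing edge that would close a new \<open>s\<close>-\<open>t\<close> path of length at
  most 3: the edge \<open>s t\<close> itself, \<open>a t\<close> on \<open>s a t\<close>, \<open>s a\<close> on \<open>s a t\<close>, \<open>a b\<close> on \<open>s a b t\<close>,
  and \<open>s x\<close> on \<open>s x k t\<close>.\<close>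
definition short_path_saturated :: "'a set set \<Rightarrow> 'a \<Rightarrow> 'a \<Rightarrow> bool" where
  "short_path_saturated G s t \<longleftrightarrow>
     {s, t} \<in> G \<and>
     (\<forall>a. {s, a} \<in> G \<longrightarrow> a \<noteq> t \<longrightarrow> {a, t} \<in> G) \<and>
     (\<forall>a. {a, t} \<in> G \<longrightarrow> a \<noteq> s \<longrightarrow> {s, a} \<in> G) \<and>
     (\<forall>a b. {s, a} \<in> G \<longrightarrow> {b, t} \<in> G \<longrightarrow> a \<noteq> t \<longrightarrow> b \<noteq> s \<longrightarrow> a \<noteq> b \<longrightarrow> {a, b} \<in> G) \<and>
     (\<forall>x k. {s, k} \<in> G \<longrightarrow> {k, t} \<in> G \<longrightarrow> {x, k} \<in> G \<longrightarrow> x \<noteq> s \<longrightarrow> x \<noteq> t \<longrightarrow> {s, x} \<in> G)"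

lemma short_path_saturatedD:
  assumes "short_path_saturated G s t"
  shows short_path_saturated_terminals: "{s, t} \<in> G"
    and short_path_saturated_left: "{s, a} \<in> G \<Longrightarrow> a \<noteq> t \<Longrightarrow> {a, t} \<in> G"
    and short_path_saturated_right: "{a, t} \<in> G \<Longrightarrow> a \<noteq> s \<Longrightarrow> {s, a} \<in> G"
    and short_path_saturated_middle:
      "{s, a} \<in> G \<Longrightarrow> {b, t} \<in> G \<Longrightarrow> a \<noteq> t \<Longrightarrow> b \<noteq> s \<Longrightarrow> a \<noteq> b \<Longrightarrow> {a, b} \<in> G"
    and short_path_saturated_detour:
      "{s, k} \<in> G \<Longrightarrow> {k, t} \<in> G \<Longrightarrow> {x, k} \<in> G \<Longrightarrow> x \<noteq> s \<Longrightarrow> x \<noteq> t \<Longrightarrow> {s, x} \<in> G"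
  using assms unfolding short_path_saturated_def by blast+

lemma short_path_saturated_reachable:
  assumes sat: "short_path_saturated G s t" and "(adj G)\<^sup>*\<^sup>* s u"
  shows "u = s \<or> {s, u} \<in> G"
  using assms(2)
proof (induction rule: rtranclp_induct)
  case (step u w)
  then have uw: "{u, w} \<in> G"
    by (simp add: adj_def)
  show ?case
  proof (cases "u = s \<or> w = s")
    case True
    then show ?thesis
      using uw by (auto simp: insert_commute)
  next
    case False
    then have su: "{s, u} \<in> G"
      using step.IH by simp
    consider "u = t" | "u \<noteq> t" "w = t" | "u \<noteq> t" "w \<noteq> t" by blast
    then show ?thesis
    proof cases
      case 1
      then have "{w, t} \<in> G"
        using uw by (simp add: insert_commute)
      then show ?thesis
        using short_path_saturated_right[OF sat] False by blast
    next
      case 2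
      then show ?thesis
        using short_path_saturated_terminals[OF sat] by simp
    next
      case 3
      then have "{u, t} \<in> G" "{w, u} \<in> G"
        using short_path_saturated_left[OF sat su] uw by (simp_all add: insert_commute)
      then show ?thesis
        using short_path_saturated_detour[OF sat su] False 3 by blast
    qed
  qed
qed simp

lemma short_path_saturated_neighbours_adjacent:
  assumes sat: "short_path_saturated G s t"
    and "{s, u} \<in> G" "{s, w} \<in> G" "u \<noteq> w" "u \<noteq> s" "w \<noteq> s"
  shows "{u, w} \<in> G"
proof -
  consider "u = t" | "w = t" | "u \<noteq> t" "w \<noteq> t" by blast
  then show ?thesis
  proof cases
    case 1
    then show ?thesis
      using short_path_saturated_left[OF sat assms(3)] assms(4) by (simp add: insert_commute)
  next
    case 2
    then show ?thesis
      using short_path_saturated_left[OF sat assms(2)] assms(4) by simp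
  next
    case 3
    then show ?thesis
      using short_path_saturated_middle[OF sat assms(2) short_path_saturated_left[OF sat assms(3)]]
        assms(4,6) by blast
  qed
qed

lemma short_path_saturated_tt_complete:
  assumes sat: "short_path_saturated G s t"
  shows "tt_complete G s t"
proof -
  have "adj G s t"
    using short_path_saturated_terminals[OF sat] by (simp add: adj_def)
  moreover have "{u, w} \<in> G" if "u = s \<or> {s, u} \<in> G" "w = s \<or> {s, w} \<in> G" "u \<noteq> w" for u w
  proof (cases "u = s \<or> w = s")
    case True
    then show ?thesis
      using that by (auto simp: insert_commute)
  next
    case False
    then show ?thesis
      using that short_path_saturated_neighbours_adjacent[OF sat] by blast
  qed
  ultimately show ?thesis
    unfolding tt_complete_def using short_path_saturated_reachable[OF sat] by blast
qed

lemma exists_essential_edge_if_not_saturated: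
  assumes G: "tt_graph V G s t" and "\<not> short_path_saturated G s t" "d \<ge> 3"
  shows "\<exists>f W. f \<in> vertex_pairs V - G \<and> essential_edge d G s t f W"
proof -
  have st: "s \<in> V" "t \<in> V" "s \<noteq> t"
    using G by (simp_all add: tt_graph_def)
  have edge: "p \<noteq> q \<and> p \<in> V \<and> q \<in> V" if "{p, q} \<in> G" for p q
    using G that unfolding tt_graph_def by (metis doubleton_eq_iff)
  have witness: "\<exists>f W. f \<in> vertex_pairs V - G \<and> essential_edge d G s t f W"
    if "x \<in> V" "y \<in> V" "x \<noteq> y" "{x, y} \<notin> G" "essential_edge d G s t {x, y} W" for x y W
    using that unfolding vertex_pairs_def by blast
  from assms(2) consider
      "{s, t} \<notin> G"
    | a where "{s, a} \<in> G" "a \<noteq> t" "{a, t} \<notin> G"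
    | a where "{a, t} \<in> G" "a \<noteq> s" "{s, a} \<notin> G"
    | a b where "{s, a} \<in> G" "{b, t} \<in> G" "a \<noteq> t" "b \<noteq> s" "a \<noteq> b" "{a, b} \<notin> G"
    | x k where "{s, k} \<in> G" "{k, t} \<in> G" "{x, k} \<in> G" "x \<noteq> s" "x \<noteq> t" "{s, x} \<notin> G"
    unfolding short_path_saturated_def by blast
  then show ?thesis
  proof cases
    case 1
    have "essential_edge d G s t {s, t} {{s, t}}"
      by (rule essential_edge_if_cut[where xs = "[s, t]" and S = "{s}"]) (use st assms(3) in auto)
    then show ?thesis
      using witness 1 st by blast
  next
    case (2 a)
    have "essential_edge d G s t {a, t} {{s, a}, {a, t}}"
      by (rule essential_edge_if_cut[where xs = "[s, a, t]" and S = "{s, a}"])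
        (use 2 st edge[of s a] assms(3) in \<open>auto simp: doubleton_eq_iff\<close>)
    then show ?thesis
      using witness 2 st edge[of s a] by blast
  next
    case (3 a)
    have "essential_edge d G s t {s, a} {{s, a}, {a, t}}"
      by (rule essential_edge_if_cut[where xs = "[s, a, t]" and S = "{s}"])
        (use 3 st edge[of a t] assms(3) in \<open>auto simp: doubleton_eq_iff\<close>)
    then show ?thesis
      using witness 3 st edge[of a t] by blast
  next
    case (4 a b)
    have "essential_edge d G s t {a, b} {{s, a}, {a, b}, {b, t}}"
      by (rule essential_edge_if_cut[where xs = "[s, a, b, t]" and S = "{s, a}"])
        (use 4 st edge[of s a] edge[of b t] assms(3) in \<open>auto simp: doubleton_eq_iff\<close>)
    then show ?thesis
      using witness 4 edge[of s a] edge[of b t] by blast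
  next
    case (5 x k)
    have "essential_edge d G s t {s, x} {{s, x}, {x, k}, {k, t}}"
      by (rule essential_edge_if_cut[where xs = "[s, x, k, t]" and S = "{s}"])
        (use 5 st edge[of s k] edge[of k t] edge[of x k] assms(3)
          in \<open>auto simp: doubleton_eq_iff\<close>)
    then show ?thesis
      using witness 5 st edge[of x k] by blast
  qed
qed

lemma pendant_vertex_stronger:
  assumes E: "tt_graph V E s t" "{s, v} \<in> E" "v \<noteq> s" "v \<noteq> t"
    and pendant: "\<And>u. {u, v} \<in> E \<Longrightarrow> u = s"
    and "\<not> tt_complete (E - {{s, v}}) s t" "d \<ge> 3"
  shows "\<exists>H. tt_graph V H s t \<and> card H = card E \<and> d_stronger d (card E) H s t E s t"
proof -
  define G where "G = E - {{s, v}}"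
  have "tt_graph V G s t"
    using E(1) by (auto simp: tt_graph_iff_vertex_pairs G_def)
  moreover have "\<not> short_path_saturated G s t"
    using assms(6) short_path_saturated_tt_complete[of G s t] unfolding G_def by blast
  ultimately obtain f W where f: "f \<in> vertex_pairs V - G" and W: "essential_edge d G s t f W"
    using exists_essential_edge_if_not_saturated[of V G s t d] assms(7) by blast
  have removable: "d_pathset d G s t (F - {{s, v}})" if "d_pathset d E s t F" for F
    using d_pathset_Diff_pendant_edge[OF that E(3,4) pendant] by (simp add: G_def)
  have "f \<noteq> {s, v}"
  proof
    assume "f = {s, v}"
    then have "d_pathset d E s t W"
      using W E(2) by (simp add: essential_edge_def G_def insert_absorb)
    then show False
      using removable W \<open>f = {s, v}\<close> by (simp add: essential_edge_def)
  qed
  then have "f \<notin> E"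
    using f by (auto simp: G_def)
  have "finite E"
    using E(1) by (rule tt_graph_finite_edges)
  have "tt_graph V (insert f G) s t"
    using E(1) f by (auto simp: tt_graph_iff_vertex_pairs G_def)
  moreover have "card (insert f G) = card E"
    unfolding G_def using card_insert_Diff_singleton[OF \<open>finite E\<close> E(2) \<open>f \<notin> E\<close>] .
  moreover have "d_stronger d (card E) (insert f G) s t E s t"
    using d_stronger_swap_edge[OF \<open>finite E\<close> E(2) \<open>f \<notin> E\<close>] removable W by (simp add: G_def)
  ultimately show ?thesis
    by blast
qed

theorem lemma6:
  fixes V :: "'a set" and E :: "'a set set" and s t v :: 'a and n m d :: nat
  assumes "n \<ge> 5" and "m \<ge> 5" and "d \<ge> 3"
    and "tt_graph V E s t" and "card V = n" and "card E = m"
    and "v \<in> V" and "degree E v = 1" and "{s, v} \<in> E"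
    and "\<not> tt_complete (E - {{s, v}}) s t"
  shows "\<exists>(V'::'a set) E' s' t'. tt_graph V' E' s' t' \<and> card V' = n \<and> card E' = m \<and>
           d_stronger d m E' s' t' E s t"
proof -
  have "v \<noteq> s"
    using assms(4,9) by (auto simp: tt_graph_iff_vertex_pairs vertex_pairs_def doubleton_eq_iff)
  have pendant: "\<And>u. {u, v} \<in> E \<Longrightarrow> u = s"
    using degree_one_neighbour_unique[OF assms(8,9)] .
  obtain H where "tt_graph V H s t" "card H = card E" "d_stronger d (card E) H s t E s t"
  proof (cases "v = t")
    case True
    moreover have "card V \<ge> 3" "card E \<ge> 3" "d \<ge> 2"
      using assms(1-3,5,6) by simp_all
    ultimately show ?thesis
      using that pendant_terminal_edge_stronger[OF assms(4)] assms(9) pendant by blast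
  next
    case False
    then show ?thesis
      using that pendant_vertex_stronger[OF assms(4,9) \<open>v \<noteq> s\<close> False pendant assms(10,3)]
      by blast
  qed
  then show ?thesis
    using assms(5,6) by blast
qed

end
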